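(* Let $V$ be a vector space of dimension $2r$ ($r\ge1$) over $\mathbb{F}_2$ with nondegenerate quadratic form $Q$, and suppose $V$ has a symmetric basis. (i) If $r\equiv 0$ or $1\pmod 4$, then $Q$ is hyperbolic. (ii) If $r\equiv 2$ or $3\pmod 4$, then $Q$ is elliptic.
   Context: The associated bilinear form of $Q$ is $B(u,v)=Q(u+v)-Q(u)-Q(v)$, and $Q$ is nondegenerate if $B$ is. $Q$ is hyperbolic if $V$ has a basis $e_1,\dots,e_r,f_1,\dots,f_r$ with $Q(e_i)=Q(f_i)=0$, $B(e_i,e_j)=B(f_i,f_j)=0$, $B(e_i,f_j)=\delta_{ij}$; it is elliptic if $V$ has a basis $e_1,\dots,e_{r-1},f_1,\dots,f_{r-1},x,y$ with the same relations among the $e_i,f_i$, all $e_i,f_i$ orthogonal to $x,y$, $Q(x)=Q(y)=1$, $B(x,y)=1$. (Every nondegenerate quadratic form on $\mathbb{F}_2^{2r}$ is exactly one of these.) A basis $\{v_1,\dots,v_{2r}\}$ is symmetric if $Q(v_i)=0$ for all $i$ and $B(v_i,v_j)=1$ for all $i\ne j$. *)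

theory Defs
  imports Main "HOL.Vector_Spaces" "HOL-Library.Z2"
begin

definition assoc_bilin :: "('v::ab_group_add \<Rightarrow> bit) \<Rightarrow> 'v \<Rightarrow> 'v \<Rightarrow> bit" where
  "assoc_bilin Q u v = Q (u + v) - Q u - Q v"

definition quadratic_form :: "(bit \<Rightarrow> 'v::ab_group_add \<Rightarrow> 'v) \<Rightarrow> ('v \<Rightarrow> bit) \<Rightarrow> bool" where
  "quadratic_form scale Q \<longleftrightarrow>
     (\<forall>a v. Q (scale a v) = a^2 * Q v) \<and>
     (\<forall>u v w. assoc_bilin Q (u + v) w = assoc_bilin Q u w + assoc_bilin Q v w) \<and>
     (\<forall>a u w. assoc_bilin Q (scale a u) w = a * assoc_bilin Q u w)"

definition nondegenerate :: "('v::ab_group_add \<Rightarrow> bit) \<Rightarrow> bool" where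
  "nondegenerate Q \<longleftrightarrow> (\<forall>u. (\<forall>v. assoc_bilin Q u v = 0) \<longrightarrow> u = 0)"

definition is_basis :: "(bit \<Rightarrow> 'v::ab_group_add \<Rightarrow> 'v) \<Rightarrow> 'v set \<Rightarrow> bool" where
  "is_basis scale S \<longleftrightarrow> \<not> module.dependent scale S \<and> module.span scale S = UNIV"

definition has_symmetric_basis :: "(bit \<Rightarrow> 'v::ab_group_add \<Rightarrow> 'v) \<Rightarrow> ('v \<Rightarrow> bit) \<Rightarrow> nat \<Rightarrow> bool" where
  "has_symmetric_basis scale Q r \<longleftrightarrow>
     (\<exists>v :: nat \<Rightarrow> 'v. inj_on v {..<2*r} \<and> is_basis scale (v ` {..<2*r}) \<and>
        (\<forall>i<2*r. Q (v i) = 0) \<and>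
        (\<forall>i<2*r. \<forall>j<2*r. i \<noteq> j \<longrightarrow> assoc_bilin Q (v i) (v j) = 1))"

definition hyperbolic :: "(bit \<Rightarrow> 'v::ab_group_add \<Rightarrow> 'v) \<Rightarrow> ('v \<Rightarrow> bit) \<Rightarrow> nat \<Rightarrow> bool" where
  "hyperbolic scale Q r \<longleftrightarrow>
     (\<exists>e f :: nat \<Rightarrow> 'v.
        card (e ` {..<r} \<union> f ` {..<r}) = 2*r \<and>
        is_basis scale (e ` {..<r} \<union> f ` {..<r}) \<and>
        (\<forall>i<r. Q (e i) = 0 \<and> Q (f i) = 0) \<and>
        (\<forall>i<r. \<forall>j<r. assoc_bilin Q (e i) (e j) = 0 \<and> assoc_bilin Q (f i) (f j) = 0 \<and>
                      assoc_bilin Q (e i) (f j) = (if i = j then 1 else 0)))"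

definition elliptic :: "(bit \<Rightarrow> 'v::ab_group_add \<Rightarrow> 'v) \<Rightarrow> ('v \<Rightarrow> bit) \<Rightarrow> nat \<Rightarrow> bool" where
  "elliptic scale Q r \<longleftrightarrow>
     (\<exists>(e :: nat \<Rightarrow> 'v) f x y.
        card (e ` {..<r-1} \<union> f ` {..<r-1} \<union> {x, y}) = 2*r \<and>
        is_basis scale (e ` {..<r-1} \<union> f ` {..<r-1} \<union> {x, y}) \<and>
        (\<forall>i<r-1. Q (e i) = 0 \<and> Q (f i) = 0) \<and>
        (\<forall>i<r-1. \<forall>j<r-1. assoc_bilin Q (e i) (e j) = 0 \<and> assoc_bilin Q (f i) (f j) = 0 \<and>
                      assoc_bilin Q (e i) (f j) = (if i = j then 1 else 0)) \<and>
        (\<forall>i<r-1. assoc_bilin Q (e i) x = 0 \<and> assoc_bilin Q (e i) y = 0 \<and>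
                  assoc_bilin Q (f i) x = 0 \<and> assoc_bilin Q (f i) y = 0) \<and>
        Q x = 1 \<and> Q y = 1 \<and> assoc_bilin Q x y = 1)"

end

(*
  Let c_k = v_0 + ... + v_(2k-1) for the symmetric basis v_0, ..., v_(2r-1). The vectors
  a_k = c_k + v_(2k) and b_k = c_k + v_(2k+1) form a symplectic basis with Q(a_k) = Q(b_k) = k mod 2,
  so V is an orthogonal sum of planes that are hyperbolic for even k and elliptic for odd k.
  Two orthogonal elliptic planes span two hyperbolic planes, so the elliptic planes 4q+1 and 4q+3
  can be merged; one elliptic plane is left over exactly when the number of odd k < r is odd,
  i.e. when r mod 4 is 2 or 3.
*)

theory Submission
  imports Defs "HOL-Combinatorics.Transposition"
begin

(* The default simp rules turn bit arithmetic into Boolean connectives, which obstructs ring reasoning. *)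
declare add_bit_eq_xor [simp del] mult_bit_eq_and [simp del]

lemma bit_add_self [simp]: "(x::bit) + x = 0"
  by (cases x) simp_all

context vector_space
begin

lemma independent_if_dual_family:
  fixes \<beta> :: "'b \<Rightarrow> 'b \<Rightarrow> 'a" and w d :: "'i \<Rightarrow> 'b"
  assumes "finite J"
    and additive: "\<And>u v z. \<beta> (u + v) z = \<beta> u z + \<beta> v z"
    and homogeneous: "\<And>c u z. \<beta> (c *s u) z = c * \<beta> u z"
    and dual: "\<And>j k. j \<in> J \<Longrightarrow> k \<in> J \<Longrightarrow> \<beta> (w k) (d j) = (if k = j then 1 else 0)"
  shows "inj_on w J" and "independent (w ` J)"
proof -
  show inj: "inj_on w J"
  proof (rule inj_onI)
    fix j k assume "j \<in> J" "k \<in> J" "w j = w k"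
    then have "\<beta> (w k) (d j) = 1" using dual[of j j] by simp
    with dual[of j k] \<open>j \<in> J\<close> \<open>k \<in> J\<close> show "j = k" by (metis zero_neq_one)
  qed
  show "independent (w ` J)"
  proof (rule independent_if_scalars_zero)
    show "finite (w ` J)" using \<open>finite J\<close> by simp
  next
    fix c x assume sum0: "(\<Sum>x\<in>w ` J. c x *s x) = 0" and "x \<in> w ` J"
    then obtain j where j: "j \<in> J" "x = w j" by blast
    interpret pairing: additive "\<lambda>u. \<beta> u (d j)" by unfold_locales (rule additive)
    have "0 = \<beta> (\<Sum>y\<in>w ` J. c y *s y) (d j)"
      using sum0 pairing.zero by simp
    also have "\<dots> = (\<Sum>y\<in>w ` J. c y * \<beta> y (d j))"
      using pairing.sum[of "\<lambda>y. c y *s y"] by (simp add: homogeneous)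
    also have "\<dots> = (\<Sum>k\<in>J. c (w k) * \<beta> (w k) (d j))"
      using inj by (simp add: sum.reindex)
    also have "\<dots> = (\<Sum>k\<in>J. if k = j then c (w k) else 0)"
      using j(1) by (intro sum.cong) (simp_all add: dual)
    also have "\<dots> = c x"
      using j \<open>finite J\<close> by simp
    finally show "c x = 0" by simp
  qed
qed

end

locale quadratic_space = vector_space scale for scale :: "bit \<Rightarrow> 'v::ab_group_add \<Rightarrow> 'v" +
  fixes Q :: "'v \<Rightarrow> bit"
  assumes quadratic_form: "quadratic_form scale Q"
begin

abbreviation B :: "'v \<Rightarrow> 'v \<Rightarrow> bit" where "B \<equiv> assoc_bilin Q"

lemma add_self [simp]: "(u::'v) + u = 0"
  using scale_left_distrib[of 1 1 u] by simp

lemma B_add_left [simp]: "B (u + v) w = B u w + B v w"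
  using quadratic_form unfolding quadratic_form_def by blast

lemma B_scale_left: "B (scale c u) w = c * B u w"
  using quadratic_form unfolding quadratic_form_def by blast

lemma B_commute: "B u w = B w u"
  unfolding assoc_bilin_def by (simp add: algebra_simps)

lemma B_add_right [simp]: "B w (u + v) = B w u + B w v"
  using B_add_left B_commute by metis

lemma Q_zero: "Q 0 = 0"
  using quadratic_form scale_zero_left[of 0] unfolding quadratic_form_def
  by (metis power_zero_numeral mult_zero_left)

lemma B_self [simp]: "B u u = 0"
  unfolding assoc_bilin_def by (simp add: Q_zero)

lemma B_zero_left [simp]: "B 0 u = 0"
  unfolding assoc_bilin_def by (simp add: Q_zero)

lemma B_zero_right [simp]: "B u 0 = 0"
  unfolding assoc_bilin_def by (simp add: Q_zero)

lemma Q_add: "Q (u + v) = Q u + Q v + B u v"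
  unfolding assoc_bilin_def by simp

definition symplectic_family :: "('i \<Rightarrow> 'v) \<Rightarrow> ('i \<Rightarrow> 'v) \<Rightarrow> 'i set \<Rightarrow> bool" where
  "symplectic_family e f I \<longleftrightarrow>
     (\<forall>i\<in>I. \<forall>j\<in>I. B (e i) (e j) = 0 \<and> B (f i) (f j) = 0 \<and> B (e i) (f j) = (if i = j then 1 else 0))"

lemma symplectic_familyD:
  assumes "symplectic_family e f I" "k \<in> I" "l \<in> I"
  shows "B (e k) (e l) = 0" "B (f k) (f l) = 0"
    "B (e k) (f l) = (if k = l then 1 else 0)" "B (f k) (e l) = (if k = l then 1 else 0)"
  using assms unfolding symplectic_family_def by (auto simp: B_commute[of "f _" "e _"])

lemma symplectic_family_reindex:
  assumes "symplectic_family e f I" "inj_on \<sigma> J" "\<sigma> ` J \<subseteq> I"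
  shows "symplectic_family (e \<circ> \<sigma>) (f \<circ> \<sigma>) J"
  using assms unfolding symplectic_family_def inj_on_def by (simp add: subset_iff)

lemma symplectic_family_independent:
  assumes "finite I" "symplectic_family e f I"
  shows "card (e ` I \<union> f ` I) = 2 * card I" and "independent (e ` I \<union> f ` I)"
proof -
  let ?w = "case_sum e f" and ?d = "case_sum f e"
  have dual: "B (?w k) (?d j) = (if k = j then 1 else 0)" if "j \<in> I <+> I" "k \<in> I <+> I" for j k
    using that symplectic_familyD[OF assms(2)] by (cases j; cases k) auto
  have "inj_on ?w (I <+> I)" and indep: "independent (?w ` (I <+> I))"
    by (rule independent_if_dual_family[of "I <+> I" B, OF _ B_add_left B_scale_left dual];
        use assms(1) in simp)+
  moreover have "?w ` (I <+> I) = e ` I \<union> f ` I"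
    by (auto intro: image_eqI[of _ _ "Inl _"] image_eqI[of _ _ "Inr _"])
  ultimately show "card (e ` I \<union> f ` I) = 2 * card I" and "independent (e ` I \<union> f ` I)"
    using card_image[of ?w "I <+> I"] assms(1) by (simp_all add: card_Plus)
qed

lemma symplectic_family_is_basis:
  assumes "finite_dimensional_vector_space scale Basis" and "dim UNIV = 2 * card I"
    and "finite I" and "symplectic_family e f I"
  shows "card (e ` I \<union> f ` I) = 2 * card I" and "is_basis scale (e ` I \<union> f ` I)"
proof -
  interpret finite_dimensional_vector_space scale Basis by fact
  show card: "card (e ` I \<union> f ` I) = 2 * card I"
    using symplectic_family_independent[OF assms(3,4)] by simp
  have indep: "independent (e ` I \<union> f ` I)"
    using symplectic_family_independent[OF assms(3,4)] by simp
  have "UNIV \<subseteq> span (e ` I \<union> f ` I)"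
    using card_ge_dim_independent[OF subset_UNIV indep] card assms(2) by simp
  then show "is_basis scale (e ` I \<union> f ` I)"
    using indep unfolding is_basis_def by auto
qed

end

locale symmetric_vectors = quadratic_space scale Q
  for scale :: "bit \<Rightarrow> 'v::ab_group_add \<Rightarrow> 'v" and Q +
  fixes v :: "nat \<Rightarrow> 'v" and r :: nat
  assumes Q_v: "i < 2 * r \<Longrightarrow> Q (v i) = 0"
    and B_v: "i < 2 * r \<Longrightarrow> j < 2 * r \<Longrightarrow> i \<noteq> j \<Longrightarrow> B (v i) (v j) = 1"
begin

definition prefix_sum :: "nat \<Rightarrow> 'v" where
  "prefix_sum k = (\<Sum>i<2 * k. v i)"

definition plane_a :: "nat \<Rightarrow> 'v" where
  "plane_a k = prefix_sum k + v (2 * k)"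

definition plane_b :: "nat \<Rightarrow> 'v" where
  "plane_b k = prefix_sum k + v (2 * k + 1)"

lemma prefix_sum_0 [simp]: "prefix_sum 0 = 0"
  by (simp add: prefix_sum_def)

lemma prefix_sum_Suc: "prefix_sum (Suc k) = prefix_sum k + v (2 * k) + v (2 * k + 1)"
  by (simp add: prefix_sum_def)

lemma B_v_v: "i < 2 * r \<Longrightarrow> j < 2 * r \<Longrightarrow> B (v i) (v j) = (if i = j then 0 else 1)"
  using B_v by simp

lemma B_prefix_sum_v:
  "k \<le> r \<Longrightarrow> j < 2 * r \<Longrightarrow> B (prefix_sum k) (v j) = (if j < 2 * k then 1 else 0)"
  by (induction k) (auto simp: prefix_sum_Suc B_v_v B_commute[of "v _" "v j"])

lemma B_prefix_sum_prefix_sum: "k \<le> r \<Longrightarrow> l \<le> r \<Longrightarrow> B (prefix_sum k) (prefix_sum l) = 0"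
  by (induction l) (auto simp: prefix_sum_Suc B_prefix_sum_v)

lemma Q_prefix_sum: "k \<le> r \<Longrightarrow> Q (prefix_sum k) = of_bool (odd k)"
  by (induction k) (auto simp: prefix_sum_Suc Q_zero Q_add Q_v B_prefix_sum_v B_v_v)

lemma Q_plane_a: "k < r \<Longrightarrow> Q (plane_a k) = of_bool (odd k)"
  by (simp add: plane_a_def Q_add Q_prefix_sum Q_v B_prefix_sum_v)

lemma Q_plane_b: "k < r \<Longrightarrow> Q (plane_b k) = of_bool (odd k)"
  by (simp add: plane_b_def Q_add Q_prefix_sum Q_v B_prefix_sum_v)

lemma symplectic_family_planes: "symplectic_family plane_a plane_b {..<r}"
  unfolding symplectic_family_def plane_a_def plane_b_def
  by (auto simp: B_prefix_sum_prefix_sum B_prefix_sum_v B_v_v B_commute[of "v _" "prefix_sum _"])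

end

definition merge_planes ::
    "nat \<Rightarrow> nat \<Rightarrow> (nat \<Rightarrow> 'v::ab_group_add) \<times> (nat \<Rightarrow> 'v) \<Rightarrow> (nat \<Rightarrow> 'v) \<times> (nat \<Rightarrow> 'v)" where
  "merge_planes i j = (\<lambda>(e, f).
     (e(i := e i + e j, j := f i + e j + f j), f(i := e i + f j, j := e i + f i + e j + f j)))"

primrec pair_up_planes :: "nat \<Rightarrow> (nat \<Rightarrow> 'v::ab_group_add) \<Rightarrow> (nat \<Rightarrow> 'v) \<Rightarrow> (nat \<Rightarrow> 'v) \<times> (nat \<Rightarrow> 'v)" where
  "pair_up_planes 0 e f = (e, f)"
| "pair_up_planes (Suc n) e f = merge_planes (4 * n + 1) (4 * n + 3) (pair_up_planes n e f)"

context quadratic_space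
begin

lemma symplectic_family_merge_planes:
  assumes "symplectic_family e f I" "i \<in> I" "j \<in> I" "i \<noteq> j"
    and "merge_planes i j (e, f) = (e', f')"
  shows "symplectic_family e' f' I"
  using assms(2-5) symplectic_familyD[OF assms(1)]
  unfolding symplectic_family_def merge_planes_def by auto

lemma Q_merge_planes:
  assumes "symplectic_family e f I" "i \<in> I" "j \<in> I" "i \<noteq> j"
    and "Q (e i) = 1" "Q (f i) = 1" "Q (e j) = 1" "Q (f j) = 1"
    and "merge_planes i j (e, f) = (e', f')"
  shows "Q (e' k) = (if k \<in> {i, j} then 0 else Q (e k))"
    and "Q (f' k) = (if k \<in> {i, j} then 0 else Q (f k))"
  using assms(2-9) symplectic_familyD[OF assms(1)]
  unfolding merge_planes_def by (auto simp: Q_add)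

lemma pair_up_planes_invariant:
  assumes "symplectic_family e f {..<r}"
    and "\<And>k. k < r \<Longrightarrow> Q (e k) = of_bool (odd k) \<and> Q (f k) = of_bool (odd k)"
  shows "4 * n \<le> r \<Longrightarrow> pair_up_planes n e f = (e', f') \<Longrightarrow>
    symplectic_family e' f' {..<r} \<and>
    (\<forall>k<r. Q (e' k) = of_bool (odd k \<and> 4 * n \<le> k) \<and> Q (f' k) = of_bool (odd k \<and> 4 * n \<le> k))"
proof (induction n arbitrary: e' f')
  case 0
  then show ?case using assms by simp
next
  case (Suc n)
  let ?i = "4 * n + 1" and ?j = "4 * n + 3"
  obtain e0 f0 where previous: "pair_up_planes n e f = (e0, f0)" by fastforce
  with Suc have sympl: "symplectic_family e0 f0 {..<r}"
    and Q_previous: "\<forall>k<r.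
      Q (e0 k) = of_bool (odd k \<and> 4 * n \<le> k) \<and> Q (f0 k) = of_bool (odd k \<and> 4 * n \<le> k)"
    by auto
  have merge: "merge_planes ?i ?j (e0, f0) = (e', f')" using Suc.prems previous by simp
  have ij: "?i \<in> {..<r}" "?j \<in> {..<r}" "?i \<noteq> ?j" using Suc.prems(1) by auto
  have "odd k \<and> 4 * n \<le> k \<and> k \<notin> {?i, ?j} \<longleftrightarrow> odd k \<and> 4 * Suc n \<le> k" for k
    by (auto simp: odd_iff_mod_2_eq_one) presburger+
  then show ?case
    using symplectic_family_merge_planes[OF sympl ij merge] Q_previous ij
      Q_merge_planes[OF sympl ij _ _ _ _ merge]
    by auto
qed

lemma hyperbolicI:
  assumes "finite_dimensional_vector_space scale Basis" "dim UNIV = 2 * r"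
    and "symplectic_family e f {..<r}" "\<And>i. i < r \<Longrightarrow> Q (e i) = 0 \<and> Q (f i) = 0"
  shows "hyperbolic scale Q r"
proof -
  have "card (e ` {..<r} \<union> f ` {..<r}) = 2 * r" "is_basis scale (e ` {..<r} \<union> f ` {..<r})"
    using symplectic_family_is_basis[of Basis "{..<r}" e f] assms(1-3) by simp_all
  then show ?thesis
    using assms(3,4) unfolding hyperbolic_def symplectic_family_def by blast
qed

lemma ellipticI:
  assumes "finite_dimensional_vector_space scale Basis" "dim UNIV = 2 * r"
    and "symplectic_family e f {..<r}" "t < r" "Q (e t) = 1" "Q (f t) = 1"
    and "\<And>i. i < r \<Longrightarrow> i \<noteq> t \<Longrightarrow> Q (e i) = 0 \<and> Q (f i) = 0"
  shows "elliptic scale Q r"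
proof -
  \<comment> \<open>move the elliptic plane to the last slot, which the definition of elliptic reserves for x, y\<close>
  define \<sigma> where "\<sigma> = transpose t (r - 1)"
  have \<sigma>: "\<And>i. i < r \<Longrightarrow> \<sigma> i < r" "\<sigma> (r - 1) = t" "\<And>i. i < r - 1 \<Longrightarrow> \<sigma> i \<noteq> t"
    using \<open>t < r\<close> by (auto simp: \<sigma>_def transpose_def)
  have sympl: "symplectic_family (e \<circ> \<sigma>) (f \<circ> \<sigma>) {..<r}"
    by (rule symplectic_family_reindex[OF assms(3)]) (use \<sigma>(1) in \<open>auto simp: \<sigma>_def\<close>)
  have "card ((e \<circ> \<sigma>) ` {..<r} \<union> (f \<circ> \<sigma>) ` {..<r}) = 2 * r"
    "is_basis scale ((e \<circ> \<sigma>) ` {..<r} \<union> (f \<circ> \<sigma>) ` {..<r})"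
    using symplectic_family_is_basis[OF assms(1) _ _ sympl] assms(2) by simp_all
  moreover have "(e \<circ> \<sigma>) ` {..<r} \<union> (f \<circ> \<sigma>) ` {..<r} =
      (e \<circ> \<sigma>) ` {..<r - 1} \<union> (f \<circ> \<sigma>) ` {..<r - 1} \<union> {e t, f t}"
  proof -
    have "{..<r} = insert (r - 1) {..<r - 1}" using \<open>t < r\<close> by auto
    then show ?thesis using \<sigma>(2) by auto
  qed
  moreover have "i < r - 1 \<Longrightarrow> Q (e (\<sigma> i)) = 0 \<and> Q (f (\<sigma> i)) = 0" for i
    using assms(7) \<sigma>(1,3) by simp
  moreover have "B (e (\<sigma> i)) (e t) = 0 \<and> B (e (\<sigma> i)) (f t) = 0 \<and>
      B (f (\<sigma> i)) (e t) = 0 \<and> B (f (\<sigma> i)) (f t) = 0"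
    if "i < r - 1" for i
    using symplectic_familyD[OF assms(3), of "\<sigma> i" t] \<sigma>(1,3) that \<open>t < r\<close> by simp
  moreover have "B (e t) (f t) = 1" using symplectic_familyD[OF assms(3)] \<open>t < r\<close> by simp
  ultimately show ?thesis
    using sympl assms(5,6) unfolding elliptic_def symplectic_family_def
    by (intro exI[of _ "e \<circ> \<sigma>"] exI[of _ "f \<circ> \<sigma>"] exI[of _ "e t"] exI[of _ "f t"]) auto
qed

end

theorem lemma3p4:
  fixes scale :: "bit \<Rightarrow> 'v::ab_group_add \<Rightarrow> 'v"
    and Q :: "'v \<Rightarrow> bit"
    and r :: nat
  assumes "vector_space scale"
    and "vector_space.dim scale (UNIV :: 'v set) = 2 * r"
    and "r \<ge> 1"
    and "quadratic_form scale Q"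
    and "nondegenerate Q"
    and "has_symmetric_basis scale Q r"
  shows "(r mod 4 = 0 \<or> r mod 4 = 1 \<longrightarrow> hyperbolic scale Q r) \<and>
         (r mod 4 = 2 \<or> r mod 4 = 3 \<longrightarrow> elliptic scale Q r)"
proof -
  obtain v :: "nat \<Rightarrow> 'v" where basis: "is_basis scale (v ` {..<2 * r})"
    and "\<forall>i<2 * r. Q (v i) = 0" "\<forall>i<2 * r. \<forall>j<2 * r. i \<noteq> j \<longrightarrow> assoc_bilin Q (v i) (v j) = 1"
    using assms(6) unfolding has_symmetric_basis_def by blast
  then interpret symmetric_vectors scale Q v r
    using assms(1,4) unfolding symmetric_vectors_def symmetric_vectors_axioms_def
      quadratic_space_def quadratic_space_axioms_def by auto
  have fin_dim: "finite_dimensional_vector_space scale (v ` {..<2 * r})"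
    using basis by unfold_locales (auto simp: is_basis_def)
  define n where "n = r div 4"
  obtain e f where "pair_up_planes n plane_a plane_b = (e, f)" by fastforce
  then have sympl: "symplectic_family e f {..<r}"
    and Q_ef: "\<And>k. k < r \<Longrightarrow>
      Q (e k) = of_bool (odd k \<and> 4 * n \<le> k) \<and> Q (f k) = of_bool (odd k \<and> 4 * n \<le> k)"
    using pair_up_planes_invariant[OF symplectic_family_planes, of n e f] Q_plane_a Q_plane_b
    unfolding n_def by auto
  have odd_tail: "odd k \<and> 4 * n \<le> k \<longleftrightarrow> (r mod 4 = 2 \<or> r mod 4 = 3) \<and> k = 4 * n + 1" if "k < r" for k
    using that unfolding n_def by presburger
  show ?thesis
  proof (intro conjI impI)
    assume "r mod 4 = 0 \<or> r mod 4 = 1"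
    then show "hyperbolic scale Q r"
      using hyperbolicI[OF fin_dim assms(2) sympl] Q_ef odd_tail by auto
  next
    assume elliptic_case: "r mod 4 = 2 \<or> r mod 4 = 3"
    then have "4 * n + 1 < r" unfolding n_def by presburger
    then show "elliptic scale Q r"
      using ellipticI[OF fin_dim assms(2) sympl] Q_ef odd_tail elliptic_case by auto
  qed
qed

end
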